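(* Let $\mathbf{w},\mathbf{v}\in\mathbb{R}^d$ be nonzero with $\theta_{\mathbf{w},\mathbf{v}}\in(0,\pi)$, and let \[ h_1(\mathbf{w},\mathbf{v})=\frac{\sin(\theta_{\mathbf{w},\mathbf{v}})\|\mathbf{v}\|}{2\pi\|\mathbf{w}\|}\left(I-\bar{\mathbf{w}}\bar{\mathbf{w}}^\top+\bar{\mathbf{n}}_{\mathbf{v},\mathbf{w}}\bar{\mathbf{n}}_{\mathbf{v},\mathbf{w}}^\top\right),\qquad h_2(\mathbf{w},\mathbf{v})=\frac{1}{2\pi}\left((\pi-\theta_{\mathbf{w},\mathbf{v}})I+\bar{\mathbf{n}}_{\mathbf{w},\mathbf{v}}\bar{\mathbf{v}}^\top+\bar{\mathbf{n}}_{\mathbf{v},\mathbf{w}}\bar{\mathbf{w}}^\top\right). \] Then $\|h_1(\mathbf{w},\mathbf{v})\|_{\mathrm{sp}}=\frac{\sin(\theta_{\mathbf{w},\mathbf{v}})\|\mathbf{v}\|}{\pi\|\mathbf{w}\|}$ and $\|h_2(\mathbf{w},\mathbf{v})\|_{\mathrm{sp}}=\frac{1}{2\pi}\left(\pi-\theta_{\mathbf{w},\mathbf{v}}+\sin(\theta_{\mathbf{w},\mathbf{v}})\right)$.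
   Context: Norms on vectors are Euclidean; $\|\cdot\|_{\mathrm{sp}}$ is the spectral norm. $\bar{\mathbf{w}}=\mathbf{w}/\|\mathbf{w}\|$; $\theta_{\mathbf{w},\mathbf{v}}=\arccos\left(\frac{\mathbf{w}^\top\mathbf{v}}{\|\mathbf{w}\|\|\mathbf{v}\|}\right)$; $\mathbf{n}_{\mathbf{v},\mathbf{w}}=\bar{\mathbf{v}}-\cos(\theta_{\mathbf{v},\mathbf{w}})\bar{\mathbf{w}}$ and $\bar{\mathbf{n}}_{\mathbf{v},\mathbf{w}}=\mathbf{n}_{\mathbf{v},\mathbf{w}}/\|\mathbf{n}_{\mathbf{v},\mathbf{w}}\|$ (similarly $\bar{\mathbf{n}}_{\mathbf{w},\mathbf{v}}$ with roles swapped). *)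

theory Defs
  imports "HOL-Analysis.Analysis"
begin

definition vec_angle :: "real^'n \<Rightarrow> real^'n \<Rightarrow> real" where
  "vec_angle w v = arccos ((w \<bullet> v) / (norm w * norm v))"

definition unitv :: "real^'n \<Rightarrow> real^'n" where
  "unitv w = (1 / norm w) *\<^sub>R w"

definition nvec :: "real^'n \<Rightarrow> real^'n \<Rightarrow> real^'n" where
  "nvec v w = unitv v - cos (vec_angle v w) *\<^sub>R unitv w"

definition nbar :: "real^'n \<Rightarrow> real^'n \<Rightarrow> real^'n" where
  "nbar v w = unitv (nvec v w)"

definition outer :: "real^'n \<Rightarrow> real^'n \<Rightarrow> real^'n^'n" where
  "outer u v = (\<chi> i j. u $ i * v $ j)"

definition spnorm :: "real^'n^'m \<Rightarrow> real" where
  "spnorm A = onorm (\<lambda>x. A *v x)"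

definition h1 :: "real^'n \<Rightarrow> real^'n \<Rightarrow> real^'n^'n" where
  "h1 w v = (sin (vec_angle w v) * norm v / (2 * pi * norm w)) *\<^sub>R
      (mat 1 - outer (unitv w) (unitv w) + outer (nbar v w) (nbar v w))"

definition h2 :: "real^'n \<Rightarrow> real^'n \<Rightarrow> real^'n^'n" where
  "h2 w v = (1 / (2 * pi)) *\<^sub>R
      ((pi - vec_angle w v) *\<^sub>R mat 1 + outer (nbar w v) (unitv v) + outer (nbar v w) (unitv w))"

end

theory Submission
  imports Defs
begin

text \<open>Write \<open>W = unitv w\<close>, \<open>V = unitv v\<close>, \<open>c = cos \<theta>\<close>, \<open>s = sin \<theta>\<close>. Then \<open>U = nbar v w\<close> is a unit
  vector orthogonal to \<open>W\<close> with \<open>V = c W + s U\<close> and \<open>nbar w v = s W - c U\<close>. Hence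
  \<open>h1 w v\<close> is \<open>s \<parallel>v\<parallel> / (2\<pi> \<parallel>w\<parallel>)\<close> times the map \<open>x \<mapsto> x - (W\<bullet>x) W + (U\<bullet>x) U\<close>, which has norm 2 (attained at \<open>U\<close>),
  and \<open>2\<pi> h2 w v = (\<pi> - \<theta>) I + M\<close>, where in the orthonormal frame \<open>W, U\<close> the map \<open>M\<close> is \<open>s\<close> times a
  reflection of the plane and vanishes on its orthogonal complement. So \<open>\<parallel>M\<parallel> \<le> s\<close>, and \<open>W + V = (1 + c) W + s U\<close>
  is a common eigenvector of \<open>I\<close> and \<open>M\<close> (eigenvalue \<open>s\<close>), which makes the triangle inequality sharp.\<close>

lemma outer_mult_vector: "outer a b *v x = (b \<bullet> x) *\<^sub>R a"
  by (simp add: vec_eq_iff outer_def matrix_vector_mult_def inner_vec_def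
      sum_distrib_left mult_ac)

lemma spnorm_eqI:
  fixes A :: "real^'n^'m"
  assumes "\<And>x. norm (A *v x) \<le> K * norm x" and "x0 \<noteq> 0"
    and "norm (A *v x0) = K * norm x0"
  shows "spnorm A = K"
proof -
  have "onorm (\<lambda>x. A *v x) \<le> K" by (rule onorm_le) (rule assms(1))
  moreover have "K * norm x0 \<le> onorm (\<lambda>x. A *v x) * norm x0"
    using onorm[OF matrix_vector_mul_bounded_linear[of A], of x0] assms(3) by simp
  then have "K \<le> onorm (\<lambda>x. A *v x)" using assms(2) by simp
  ultimately show ?thesis unfolding spnorm_def by simp
qed

lemma orthonormal_pair_bessel:
  fixes e1 e2 x :: "'a::real_inner"
  assumes "norm e1 = 1" "norm e2 = 1" "e1 \<bullet> e2 = 0"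
  shows "(e1 \<bullet> x)\<^sup>2 + (e2 \<bullet> x)\<^sup>2 \<le> (norm x)\<^sup>2"
proof -
  have "e1 \<bullet> e1 = 1" "e2 \<bullet> e2 = 1" using assms by (simp_all add: norm_eq_1)
  then have "(norm (x - (e1 \<bullet> x) *\<^sub>R e1 - (e2 \<bullet> x) *\<^sub>R e2))\<^sup>2
      = (norm x)\<^sup>2 - (e1 \<bullet> x)\<^sup>2 - (e2 \<bullet> x)\<^sup>2"
    unfolding power2_norm_eq_inner using assms(3)
    by (simp add: inner_diff_left inner_diff_right inner_commute power2_eq_square algebra_simps)
  then show ?thesis by (metis diff_diff_eq diff_ge_0_iff_ge zero_le_power2)
qed

lemma norm_orthonormal_reflect_le:
  fixes e1 e2 x :: "'a::real_inner"
  assumes "norm e1 = 1" "norm e2 = 1" "e1 \<bullet> e2 = 0"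
  shows "norm (x - (e1 \<bullet> x) *\<^sub>R e1 + (e2 \<bullet> x) *\<^sub>R e2) \<le> 2 * norm x"
proof -
  have "e1 \<bullet> e1 = 1" "e2 \<bullet> e2 = 1" using assms by (simp_all add: norm_eq_1)
  then have "(norm (x - (e1 \<bullet> x) *\<^sub>R e1 + (e2 \<bullet> x) *\<^sub>R e2))\<^sup>2
      = (norm x)\<^sup>2 - (e1 \<bullet> x)\<^sup>2 + 3 * (e2 \<bullet> x)\<^sup>2"
    unfolding power2_norm_eq_inner using assms(3)
    by (simp add: inner_diff_left inner_diff_right inner_add_left inner_add_right
        inner_commute power2_eq_square algebra_simps)
  also have "\<dots> \<le> 4 * (norm x)\<^sup>2"
    using orthonormal_pair_bessel[OF assms, of x] zero_le_power2[of "e1 \<bullet> x"] by linarith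
  also have "\<dots> = (2 * norm x)\<^sup>2" by (simp add: power_mult_distrib)
  finally show ?thesis by (rule power2_le_imp_le) simp
qed

text \<open>In the frame \<open>e1, e2\<close> the map sends coordinates \<open>(a, b)\<close> to \<open>s (c a + s b, s a - c b)\<close>,
  i.e. \<open>s\<close> times a reflection, and it kills the orthogonal complement.\<close>

lemma norm_orthonormal_scaled_reflect_le:
  fixes e1 e2 x :: "'a::real_inner"
  assumes "norm e1 = 1" "norm e2 = 1" "e1 \<bullet> e2 = 0" "c\<^sup>2 + s\<^sup>2 = 1" "0 \<le> s"
  shows "norm (((c *\<^sub>R e1 + s *\<^sub>R e2) \<bullet> x) *\<^sub>R (s *\<^sub>R e1 - c *\<^sub>R e2) + (e1 \<bullet> x) *\<^sub>R e2)
     \<le> s * norm x"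
proof -
  let ?y = "((c *\<^sub>R e1 + s *\<^sub>R e2) \<bullet> x) *\<^sub>R (s *\<^sub>R e1 - c *\<^sub>R e2) + (e1 \<bullet> x) *\<^sub>R e2"
  have "e1 \<bullet> e1 = 1" "e2 \<bullet> e2 = 1" using assms by (simp_all add: norm_eq_1)
  then have "(norm ?y)\<^sup>2 = (c * (e1 \<bullet> x) + s * (e2 \<bullet> x))\<^sup>2 * (s\<^sup>2 + c\<^sup>2) + (e1 \<bullet> x)\<^sup>2
        - 2 * c * (c * (e1 \<bullet> x) + s * (e2 \<bullet> x)) * (e1 \<bullet> x)"
    unfolding power2_norm_eq_inner using assms(3)
    by (simp add: inner_diff_left inner_diff_right inner_add_left inner_add_right
        inner_commute power2_eq_square algebra_simps)
  also have "\<dots> = s\<^sup>2 * ((e1 \<bullet> x)\<^sup>2 + (e2 \<bullet> x)\<^sup>2)"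
    using assms(4) by algebra
  also have "\<dots> \<le> (s * norm x)\<^sup>2"
    using orthonormal_pair_bessel[OF assms(1-3), of x]
    by (simp add: mult_left_mono power_mult_distrib)
  finally show ?thesis by (rule power2_le_imp_le) (use assms in simp)
qed

lemma orthonormal_scaled_reflect_eigenvector:
  fixes e1 e2 :: "'a::real_inner"
  assumes "norm e1 = 1" "norm e2 = 1" "e1 \<bullet> e2 = 0" "c\<^sup>2 + s\<^sup>2 = 1"
  defines "x0 \<equiv> (1 + c) *\<^sub>R e1 + s *\<^sub>R e2"
  shows "((c *\<^sub>R e1 + s *\<^sub>R e2) \<bullet> x0) *\<^sub>R (s *\<^sub>R e1 - c *\<^sub>R e2) + (e1 \<bullet> x0) *\<^sub>R e2 = s *\<^sub>R x0"
proof -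
  have "e1 \<bullet> x0 = 1 + c" and "(c *\<^sub>R e1 + s *\<^sub>R e2) \<bullet> x0 = 1 + c"
    using assms(1-4)
    by (simp_all add: x0_def inner_add_left inner_add_right inner_commute norm_eq_1
        power2_eq_square algebra_simps)
  then have "((c *\<^sub>R e1 + s *\<^sub>R e2) \<bullet> x0) *\<^sub>R (s *\<^sub>R e1 - c *\<^sub>R e2) + (e1 \<bullet> x0) *\<^sub>R e2
      = (s * (1 + c)) *\<^sub>R e1 + ((1 + c) * (1 - c)) *\<^sub>R e2"
    by (simp add: algebra_simps)
  also have "(1 + c) * (1 - c) = s * s" using assms(4) by (simp add: power2_eq_square algebra_simps)
  finally show ?thesis by (simp add: x0_def algebra_simps)
qed

lemma norm_unitv: "w \<noteq> 0 \<Longrightarrow> norm (unitv w) = 1"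
  by (simp add: unitv_def)

lemma vec_angle_commute: "vec_angle v w = vec_angle w v"
  by (simp add: vec_angle_def inner_commute mult.commute)

lemma norm_unitv_le: "norm (unitv w) \<le> 1"
  by (cases "w = 0") (simp_all add: unitv_def)

lemma cos_vec_angle: "cos (vec_angle w v) = unitv w \<bullet> unitv v"
proof -
  have "\<bar>unitv w \<bullet> unitv v\<bar> \<le> norm (unitv w) * norm (unitv v)"
    by (rule Cauchy_Schwarz_ineq2)
  also have "\<dots> \<le> 1"
    using norm_unitv_le[of w] norm_unitv_le[of v] by (simp add: mult_le_one)
  finally have "\<bar>unitv w \<bullet> unitv v\<bar> \<le> 1" .
  moreover have "unitv w \<bullet> unitv v = (w \<bullet> v) / (norm w * norm v)"
    by (simp add: unitv_def)
  ultimately show ?thesis by (simp add: vec_angle_def cos_arccos_abs)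
qed

lemma norm_nvec:
  assumes "w \<noteq> 0" "v \<noteq> 0" "0 \<le> sin (vec_angle v w)"
  shows "norm (nvec v w) = sin (vec_angle v w)"
proof -
  let ?c = "cos (vec_angle v w)"
  have "unitv v \<bullet> unitv v = 1" "unitv w \<bullet> unitv w = 1"
    using norm_unitv[OF assms(2)] norm_unitv[OF assms(1)] by (simp_all add: norm_eq_1)
  then have "(norm (nvec v w))\<^sup>2 = 1 - ?c\<^sup>2"
    unfolding power2_norm_eq_inner nvec_def cos_vec_angle
    by (simp add: inner_diff_left inner_diff_right inner_commute power2_eq_square algebra_simps)
  also have "\<dots> = (sin (vec_angle v w))\<^sup>2" by (simp add: sin_squared_eq)
  finally show ?thesis using assms(3) by (simp add: power2_eq_iff_nonneg)
qed

lemma vec_angle_frame: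
  fixes w v :: "real^'n"
  assumes "w \<noteq> 0" "v \<noteq> 0" "0 < vec_angle w v" "vec_angle w v < pi"
  defines "c \<equiv> cos (vec_angle w v)" and "s \<equiv> sin (vec_angle w v)"
  shows "norm (nbar v w) = 1" and "unitv w \<bullet> nbar v w = 0"
    and "unitv v = c *\<^sub>R unitv w + s *\<^sub>R nbar v w"
    and "nbar w v = s *\<^sub>R unitv w - c *\<^sub>R nbar v w"
proof -
  let ?W = "unitv w" and ?V = "unitv v"
  have s0: "0 < s" using assms(3,4) by (simp add: s_def sin_gt_zero)
  have WW: "?W \<bullet> ?W = 1" using norm_unitv[OF assms(1)] by (simp add: norm_eq_1)
  have c: "c = ?W \<bullet> ?V" by (simp add: c_def cos_vec_angle)
  have nvw: "nvec v w = ?V - c *\<^sub>R ?W" and nwv: "nvec w v = ?W - c *\<^sub>R ?V"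
    by (simp_all add: nvec_def vec_angle_commute c_def)
  have nbar_vw: "nbar v w = (1 / s) *\<^sub>R (?V - c *\<^sub>R ?W)"
    using norm_nvec[OF assms(1,2)] s0
    by (simp add: nbar_def unitv_def nvw vec_angle_commute s_def)
  have nbar_wv: "nbar w v = (1 / s) *\<^sub>R (?W - c *\<^sub>R ?V)"
    using norm_nvec[OF assms(2,1)] s0 by (simp add: nbar_def unitv_def nwv s_def)
  show "norm (nbar v w) = 1"
    unfolding nbar_def using norm_nvec[OF assms(1,2)] s0
    by (intro norm_unitv) (auto simp: vec_angle_commute s_def)
  show "?W \<bullet> nbar v w = 0" using WW c by (simp add: nbar_vw inner_diff_right inner_commute)
  show V: "?V = c *\<^sub>R ?W + s *\<^sub>R nbar v w" using s0 by (simp add: nbar_vw)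
  have "s *\<^sub>R nbar w v = (c\<^sup>2 + s\<^sup>2) *\<^sub>R ?W - c *\<^sub>R ?V"
    using s0 by (simp add: nbar_wv s_def c_def)
  also have "\<dots> = s *\<^sub>R (s *\<^sub>R ?W - c *\<^sub>R nbar v w)"
    by (subst V) (simp add: algebra_simps power2_eq_square)
  finally show "nbar w v = s *\<^sub>R ?W - c *\<^sub>R nbar v w" using s0 by simp
qed

lemma h1_mult_vector:
  "h1 w v *v x = (sin (vec_angle w v) * norm v / (2 * pi * norm w)) *\<^sub>R
     (x - (unitv w \<bullet> x) *\<^sub>R unitv w + (nbar v w \<bullet> x) *\<^sub>R nbar v w)"
  by (simp add: h1_def scaleR_matrix_vector_assoc[symmetric] matrix_vector_mult_add_rdistrib
      matrix_vector_mult_diff_rdistrib outer_mult_vector)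

lemma h2_mult_vector:
  "h2 w v *v x = (1 / (2 * pi)) *\<^sub>R ((pi - vec_angle w v) *\<^sub>R x +
     ((unitv v \<bullet> x) *\<^sub>R nbar w v + (unitv w \<bullet> x) *\<^sub>R nbar v w))"
  by (simp add: h2_def scaleR_matrix_vector_assoc[symmetric] matrix_vector_mult_add_rdistrib
      outer_mult_vector)

lemma spnorm_h1:
  fixes w v :: "real^'n"
  assumes "w \<noteq> 0" "v \<noteq> 0" "0 < vec_angle w v" "vec_angle w v < pi"
  shows "spnorm (h1 w v) = sin (vec_angle w v) * norm v / (pi * norm w)"
proof -
  let ?W = "unitv w" and ?U = "nbar v w"
  define k where "k = sin (vec_angle w v) * norm v / (2 * pi * norm w)"
  have k0: "0 < k" using assms by (simp add: k_def sin_gt_zero)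
  note frame = vec_angle_frame[OF assms]
  have nW: "norm ?W = 1" using assms(1) by (rule norm_unitv)
  have "spnorm (h1 w v) = k * 2"
  proof (rule spnorm_eqI)
    show "norm (h1 w v *v x) \<le> k * 2 * norm x" for x
      using norm_orthonormal_reflect_le[OF nW frame(1,2), of x] k0
      by (simp add: h1_mult_vector k_def[symmetric])
    show "?U \<noteq> 0" using frame(1) by auto
    have "h1 w v *v ?U = k *\<^sub>R (?U + ?U)"
      using frame(1,2) by (simp add: h1_mult_vector k_def[symmetric] norm_eq_1 inner_commute)
    then have "h1 w v *v ?U = (2 * k) *\<^sub>R ?U" by (simp add: scaleR_2[symmetric])
    then show "norm (h1 w v *v ?U) = k * 2 * norm ?U" using k0 frame(1) by simp
  qed
  then show ?thesis by (simp add: k_def)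
qed

lemma spnorm_h2:
  fixes w v :: "real^'n"
  assumes "w \<noteq> 0" "v \<noteq> 0" "0 < vec_angle w v" "vec_angle w v < pi"
  shows "spnorm (h2 w v) = (pi - vec_angle w v + sin (vec_angle w v)) / (2 * pi)"
proof -
  let ?W = "unitv w" and ?U = "nbar v w"
  define c where "c = cos (vec_angle w v)"
  define s where "s = sin (vec_angle w v)"
  define q where "q = pi - vec_angle w v"
  define M where "M x = ((c *\<^sub>R ?W + s *\<^sub>R ?U) \<bullet> x) *\<^sub>R (s *\<^sub>R ?W - c *\<^sub>R ?U) + (?W \<bullet> x) *\<^sub>R ?U"
    for x
  note frame = vec_angle_frame[OF assms, folded c_def s_def]
  have nW: "norm ?W = 1" using assms(1) by (rule norm_unitv)
  have s0: "0 < s" and q0: "0 < q" using assms(3,4) by (simp_all add: s_def q_def sin_gt_zero)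
  have cs: "c\<^sup>2 + s\<^sup>2 = 1" by (simp add: c_def s_def)
  have h2x: "h2 w v *v x = (1 / (2 * pi)) *\<^sub>R (q *\<^sub>R x + M x)" for x
    by (simp add: h2_mult_vector frame(3,4) M_def q_def)
  have c_gt: "-1 < c"
  proof -
    have "0 < s\<^sup>2" using s0 by simp
    then have "c\<^sup>2 < 1" using cs by linarith
    then show ?thesis by (simp add: abs_square_less_1)
  qed
  define x0 where "x0 = (1 + c) *\<^sub>R ?W + s *\<^sub>R ?U"
  have Mx0: "M x0 = s *\<^sub>R x0"
    unfolding M_def x0_def by (rule orthonormal_scaled_reflect_eigenvector[OF nW frame(1,2) cs])
  have "spnorm (h2 w v) = (q + s) / (2 * pi)"
  proof (rule spnorm_eqI)
    fix x
    have "norm (q *\<^sub>R x + M x) \<le> q * norm x + s * norm x"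
      using norm_triangle_ineq[of "q *\<^sub>R x" "M x"] q0
        norm_orthonormal_scaled_reflect_le[OF nW frame(1,2) cs less_imp_le[OF s0], of x]
      by (simp add: M_def)
    then show "norm (h2 w v *v x) \<le> (q + s) / (2 * pi) * norm x"
      by (simp add: h2x divide_right_mono algebra_simps del: scaleR_add_right)
  next
    have "?W \<bullet> x0 = 1 + c" using frame(2) nW by (simp add: x0_def inner_add_right norm_eq_1)
    then show "x0 \<noteq> 0" using c_gt by auto
    have "h2 w v *v x0 = ((q + s) / (2 * pi)) *\<^sub>R x0"
      by (simp add: h2x Mx0 scaleR_add_left[symmetric] add_divide_distrib)
    then show "norm (h2 w v *v x0) = (q + s) / (2 * pi) * norm x0" using q0 s0 by simp
  qed
  then show ?thesis by (simp add: q_def s_def)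
qed

theorem lemma9:
  fixes w v :: "real^'n"
  assumes "w \<noteq> 0" and "v \<noteq> 0"
    and "0 < vec_angle w v" and "vec_angle w v < pi"
  shows "spnorm (h1 w v) = sin (vec_angle w v) * norm v / (pi * norm w) \<and>
         spnorm (h2 w v) = (pi - vec_angle w v + sin (vec_angle w v)) / (2 * pi)"
  using spnorm_h1[OF assms] spnorm_h2[OF assms] by simp

end
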